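(* Let $\bar{\mathbf{H}}_{RT}\in\mathbb{C}^{N_R\times N_T}$, $\bar{\mathbf{H}}_{RI}\in\mathbb{C}^{N_R\times N_I}$, $\bar{\mathbf{H}}_{IT}\in\mathbb{C}^{N_I\times N_T}$, $Y_0>0$, $P_T>0$, and let $\mathbf{P}\in\mathbb{R}^{N_I\times N_I}$ be symmetric positive definite and $\mathbf{Q}\in\mathbb{R}^{N_I\times N_I}$ symmetric. For real symmetric $\mathbf{B}_I\in\mathbb{R}^{N_I\times N_I}$ let $\bar{\mathbf{B}}_I=Y_0\mathbf{P}^{-1/2}(\mathbf{B}_I+\mathbf{Q})\mathbf{P}^{-1/2}$ and $\bar{\boldsymbol{\Theta}}=(Y_0\mathbf{I}+\mathrm{i}\bar{\mathbf{B}}_I)^{-1}(Y_0\mathbf{I}-\mathrm{i}\bar{\mathbf{B}}_I)$. Then $$\sup\Big\{P_T\big|\mathbf{g}^H(\bar{\mathbf{H}}_{RT}+\bar{\mathbf{H}}_{RI}\bar{\boldsymbol{\Theta}}\bar{\mathbf{H}}_{IT})\mathbf{w}\big|^2:\ \mathbf{B}_I=\mathbf{B}_I^T\in\mathbb{R}^{N_I\times N_I},\ \mathbf{w}\in\mathbb{C}^{N_T},\ \mathbf{g}\in\mathbb{C}^{N_R},\ \|\mathbf{w}\|_2=\|\mathbf{g}\|_2=1\Big\}$$ $$=P_T\max\Big\{\|\bar{\mathbf{H}}_{RT}\mathbf{w}+\bar{\mathbf{H}}_{RI}\mathbf{u}\|_2^2:\ \mathbf{u}\in\mathbb{C}^{N_I},\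 \mathbf{w}\in\mathbb{C}^{N_T},\ \|\mathbf{u}\|_2=\|\bar{\mathbf{H}}_{IT}\mathbf{w}\|_2,\ \|\mathbf{w}\|_2=1\Big\}.$$
   Context: This is the receive-power maximization for a single-stream RIS-aided MIMO system with a fully-connected (lossless, reciprocal) RIS under the compact channel model $\bar{\mathbf{H}}_{RT}+\bar{\mathbf{H}}_{RI}\bar{\boldsymbol{\Theta}}\bar{\mathbf{H}}_{IT}$; $\mathbf{P}^{-1/2}$ denotes the inverse of the positive definite square root of $\mathbf{P}$, $\mathsf{i}$ the imaginary unit. *)

theory Defs
  imports "HOL-Analysis.Analysis"
begin

definition sym_real :: "real^'n^'n \<Rightarrow> bool" where
  "sym_real A \<longleftrightarrow> transpose A = A"

definition pos_def_real :: "real^'n^'n \<Rightarrow> bool" where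
  "pos_def_real A \<longleftrightarrow> sym_real A \<and> (\<forall>x. x \<noteq> 0 \<longrightarrow> x \<bullet> (A *v x) > 0)"

definition pd_sqrt :: "real^'n^'n \<Rightarrow> real^'n^'n" where
  "pd_sqrt P = (THE S. pos_def_real S \<and> S ** S = P)"

definition inv_sqrt :: "real^'n^'n \<Rightarrow> real^'n^'n" where
  "inv_sqrt P = matrix_inv (pd_sqrt P)"

definition Bbar :: "real \<Rightarrow> real^'n^'n \<Rightarrow> real^'n^'n \<Rightarrow> real^'n^'n \<Rightarrow> real^'n^'n" where
  "Bbar Y0 P Q B = Y0 *\<^sub>R (inv_sqrt P ** (B + Q) ** inv_sqrt P)"

definition Theta_bar :: "real \<Rightarrow> real^'n^'n \<Rightarrow> real^'n^'n \<Rightarrow> real^'n^'n \<Rightarrow> complex^'n^'n" where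
  "Theta_bar Y0 P Q B =
     matrix_inv (\<chi> i j. (if i = j then complex_of_real Y0 else 0) + \<i> * complex_of_real (Bbar Y0 P Q B $ i $ j))
     ** (\<chi> i j. (if i = j then complex_of_real Y0 else 0) - \<i> * complex_of_real (Bbar Y0 P Q B $ i $ j))"

definition herm_form :: "complex^'m \<Rightarrow> complex^'n^'m \<Rightarrow> complex^'n \<Rightarrow> complex" where
  "herm_form g M w = (\<Sum>i\<in>UNIV. cnj (g $ i) * ((M *v w) $ i))"

end

theory Submission
  imports Defs
begin

text \<open>Write \<open>\<Theta>(X) = (Y0 I + \<i> X)\<^sup>-\<^sup>1 (Y0 I - \<i> X)\<close>. Through the unique positive definite square root
  of \<open>P\<close>, \<open>B \<mapsto> B-bar\<close> is a bijection of the real symmetric matrices, so \<open>X = B-bar\<close> ranges over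
  all of them. For real symmetric \<open>X\<close> the matrices \<open>Y0 I \<plusminus> \<i> X\<close> commute and have the same
  norm on every vector, hence \<open>\<Theta>(X)\<close> is unitary; with Cauchy-Schwarz in \<open>g\<close> this bounds the
  objective by \<open>\<parallel>H_RT w + H_RI u\<parallel>\<^sup>2\<close> with \<open>u = \<Theta>(X) H_IT w\<close> of norm \<open>\<parallel>H_IT w\<parallel>\<close>.

  Conversely \<open>\<Theta>(X) a = b\<close> is equivalent to \<open>X (a + b) = -\<i> Y0 (a - b)\<close>, i.e. to two real
  interpolation conditions \<open>X p1 = q1\<close>, \<open>X p2 = q2\<close>. A symmetric solution exists when
  \<open>p1 \<bullet> q2 = p2 \<bullet> q1\<close>, which is \<open>\<parallel>a\<parallel> = \<parallel>b\<parallel>\<close>, and \<open>p1, p2\<close> are non-degenerate. Degeneracy is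
  removed by replacing \<open>(a, b)\<close> by \<open>(a + t, b + t)\<close> for a small \<open>t\<close>, so every admissible \<open>u\<close> is a
  limit of vectors \<open>\<Theta>(X) H_IT w\<close>. Aligning \<open>g\<close> with the received vector and maximising over the
  compact set of admissible \<open>(u, w)\<close> gives the equality.\<close>

section \<open>Symmetric matrices and positive definite square roots\<close>

lemma sym_real_inner:
  fixes A :: "real^'n^'n"
  assumes "sym_real A"
  shows "x \<bullet> (A *v y) = (A *v x) \<bullet> y"
proof -
  have "x \<bullet> (A *v y) = (x v* A) \<bullet> y" by (simp add: dot_lmul_matrix)
  also have "x v* A = transpose A *v x" by simp
  also have "\<dots> = A *v x" using assms by (simp add: sym_real_def)
  finally show ?thesis .
qed

lemma transpose_add: "transpose (A + B) = transpose A + transpose (B::'a::semiring_1^'n^'n)"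
  by (simp add: transpose_def vec_eq_iff)

lemma transpose_diff: "transpose (A - B) = transpose A - transpose (B::'a::ring_1^'n^'n)"
  by (simp add: transpose_def vec_eq_iff)

lemma sym_real_uminus: "sym_real X \<Longrightarrow> sym_real (- X)"
  by (simp add: sym_real_def transpose_def vec_eq_iff)

lemma sym_real_0: "sym_real 0"
  by (simp add: sym_real_def transpose_def vec_eq_iff)

lemma linear_le_quadratic_imp_zero:
  fixes c K :: real
  assumes "\<And>t. 2 * t * c \<le> t\<^sup>2 * K"
  shows "c = 0"
proof (rule ccontr)
  assume "c \<noteq> 0"
  define L where "L = \<bar>K\<bar> + 1"
  have "L > 0" "K < 2 * L" by (auto simp: L_def)
  have "2 * (c / L) * c \<le> (c / L)\<^sup>2 * K" by (rule assms)
  hence "c\<^sup>2 * (2 * L) \<le> c\<^sup>2 * K"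
    using \<open>L > 0\<close> by (simp add: field_simps power2_eq_square)
  thus False using \<open>c \<noteq> 0\<close> \<open>K < 2 * L\<close> by (simp add: mult_le_cancel_left)
qed

text \<open>The first variation of the Rayleigh quotient at a maximiser \<open>v\<close> vanishes in every direction
  orthogonal to \<open>v\<close>.\<close>
lemma sym_real_Rayleigh_max_orthogonal:
  fixes A :: "real^'n^'n"
  assumes sym: "sym_real A" and sub: "subspace V" and "v \<in> V" "v \<bullet> v = 1"
    and max: "\<And>x. x \<in> V \<Longrightarrow> x \<bullet> (A *v x) \<le> (v \<bullet> (A *v v)) * (x \<bullet> x)"
    and "w \<in> V" "v \<bullet> w = 0"
  shows "w \<bullet> (A *v v) = 0"
proof (rule linear_le_quadratic_imp_zero)
  fix t :: real
  define f where "f x = x \<bullet> (A *v x)" for x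
  have "v + t *\<^sub>R w \<in> V" using assms(3,6) sub by (simp add: subspace_add subspace_scale)
  hence "f (v + t *\<^sub>R w) \<le> f v * ((v + t *\<^sub>R w) \<bullet> (v + t *\<^sub>R w))"
    unfolding f_def by (rule max)
  moreover have "f (v + t *\<^sub>R w) = f v + 2 * t * (w \<bullet> (A *v v)) + t\<^sup>2 * f w"
    using sym_real_inner[OF sym, of v w]
    by (simp add: f_def matrix_vector_right_distrib matrix_vector_mult_scaleR inner_add_left
        inner_add_right inner_commute power2_eq_square algebra_simps)
  ultimately show "2 * t * (w \<bullet> (A *v v)) \<le> t\<^sup>2 * (f v * (w \<bullet> w) - f w)"
    using assms(4,7)
    by (simp add: inner_add_left inner_add_right inner_commute power2_eq_square algebra_simps)
qed

lemma sym_real_eigenvector_in_invariant_subspace: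
  fixes A :: "real^'n^'n"
  assumes sym: "sym_real A" and sub: "subspace V" and inv: "\<And>x. x \<in> V \<Longrightarrow> A *v x \<in> V"
    and ne: "V \<noteq> {0}"
  shows "\<exists>v\<in>V. norm v = 1 \<and> A *v v = (v \<bullet> (A *v v)) *\<^sub>R v"
proof -
  define f where "f x = x \<bullet> (A *v x)" for x
  define K where "K = V \<inter> sphere 0 1"
  have "compact K" unfolding K_def
    by (simp add: closed_subspace sub closed_Int_compact inf_commute)
  have normalize: "x /\<^sub>R norm x \<in> K" if "x \<in> V" "x \<noteq> 0" for x
    using that sub by (simp add: K_def subspace_scale)
  obtain x0 where "x0 \<in> V" "x0 \<noteq> 0" using ne sub subspace_0 by blast
  hence "K \<noteq> {}" using normalize by blast
  have "continuous_on K f" unfolding f_def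
    by (intro continuous_intros linear_continuous_on) (simp add: linear_linear)
  then obtain v where "v \<in> K" and vmax: "\<And>y. y \<in> K \<Longrightarrow> f y \<le> f v"
    using continuous_attains_sup[OF \<open>compact K\<close> \<open>K \<noteq> {}\<close>] by blast
  hence vV: "v \<in> V" and vv: "v \<bullet> v = 1" by (auto simp: K_def norm_eq_1)
  have max: "f x \<le> f v * (x \<bullet> x)" if "x \<in> V" for x
  proof (cases "x = 0")
    case False
    have "f (x /\<^sub>R norm x) = f x / (x \<bullet> x)"
      by (simp add: f_def matrix_vector_mult_scaleR power2_eq_square field_simps
          flip: power2_norm_eq_inner)
    thus ?thesis using vmax[OF normalize[OF that False]] False by (simp add: divide_le_eq)
  qed (simp add: f_def)
  define w where "w = A *v v - f v *\<^sub>R v"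
  have "w \<in> V" using inv[OF vV] vV sub by (simp add: w_def subspace_diff subspace_scale)
  moreover have "v \<bullet> w = 0" using vv by (simp add: w_def f_def inner_diff_right)
  ultimately have "w \<bullet> (A *v v) = 0"
    using sym_real_Rayleigh_max_orthogonal[OF sym sub vV vv] max by (simp add: f_def)
  hence "w \<bullet> w = 0" using \<open>v \<bullet> w = 0\<close> by (simp add: w_def inner_diff_right inner_commute)
  thus ?thesis using vV vv by (auto simp: w_def f_def norm_eq_1)
qed

lemma sym_real_orthogonal_complement_invariant:
  fixes A :: "real^'n^'n"
  assumes "sym_real A" "A *v v = c *\<^sub>R v" "\<forall>x\<in>V. A *v x \<in> V" "x \<in> V" "v \<bullet> x = 0"
  shows "A *v x \<in> V \<and> v \<bullet> (A *v x) = 0"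
proof -
  have "v \<bullet> (A *v x) = (A *v v) \<bullet> x" by (rule sym_real_inner[OF assms(1)])
  thus ?thesis using assms(2-5) by simp
qed

lemma span_insert_orthogonal_complement:
  fixes v :: "real^'n"
  assumes "subspace V" "v \<in> V" "v \<bullet> v = 1" "{x\<in>V. v \<bullet> x = 0} \<subseteq> span B"
  shows "V \<subseteq> span (insert v B)"
proof
  fix x assume "x \<in> V"
  hence "x - (v \<bullet> x) *\<^sub>R v \<in> span B" using assms
    by (auto simp: subspace_diff subspace_scale inner_diff_right)
  hence "x - (v \<bullet> x) *\<^sub>R v \<in> span (insert v B)" using span_mono[of B "insert v B"] by blast
  moreover have "(v \<bullet> x) *\<^sub>R v \<in> span (insert v B)" by (simp add: span_base span_scale)
  ultimately have "(x - (v \<bullet> x) *\<^sub>R v) + (v \<bullet> x) *\<^sub>R v \<in> span (insert v B)"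
    by (rule span_add)
  thus "x \<in> span (insert v B)" by simp
qed

lemma sym_real_eigenbasis_of_invariant_subspace:
  fixes A :: "real^'n^'n"
  assumes sym: "sym_real A"
  shows "subspace V \<Longrightarrow> (\<forall>x\<in>V. A *v x \<in> V) \<Longrightarrow> \<exists>B. finite B \<and> B \<subseteq> V \<and>
     (\<forall>b\<in>B. norm b = 1 \<and> A *v b = (b \<bullet> (A *v b)) *\<^sub>R b) \<and> pairwise orthogonal B \<and> V \<subseteq> span B"
proof (induction "dim V" arbitrary: V rule: less_induct)
  case less
  show ?case
  proof (cases "V = {0}")
    case True
    then show ?thesis by (intro exI[of _ "{}"]) auto
  next
    case False
    obtain v where vV: "v \<in> V" and nv: "norm v = 1" and ev: "A *v v = (v \<bullet> (A *v v)) *\<^sub>R v"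
      using sym_real_eigenvector_in_invariant_subspace[OF sym less.prems(1) _ False] less.prems(2)
      by blast
    have vv: "v \<bullet> v = 1" using nv by (simp add: norm_eq_1)
    define W where "W = {x\<in>V. v \<bullet> x = 0}"
    have sub: "subspace W" using less.prems(1) unfolding W_def subspace_def
      by (auto simp: inner_add_right)
    moreover have inv: "\<forall>x\<in>W. A *v x \<in> W"
      using sym_real_orthogonal_complement_invariant[OF sym ev less.prems(2)] by (simp add: W_def)
    moreover have "dim W < dim V"
    proof (rule dim_psubset)
      have "v \<notin> W" using vv by (simp add: W_def)
      moreover have "W \<subseteq> V" by (auto simp: W_def)
      ultimately have "W \<subset> V" using vV by blast
      moreover have "span W = W" "span V = V" using \<open>subspace W\<close> less.prems(1) by simp_all
      ultimately show "span W \<subset> span V" by metis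
    qed
    ultimately obtain B where B: "finite B" "B \<subseteq> W"
      "\<forall>b\<in>B. norm b = 1 \<and> A *v b = (b \<bullet> (A *v b)) *\<^sub>R b" "pairwise orthogonal B" "W \<subseteq> span B"
      using less.hyps[OF _ sub inv] by blast
    have "V \<subseteq> span (insert v B)"
      using span_insert_orthogonal_complement[OF less.prems(1) vV vv] B(5) by (simp add: W_def)
    moreover have "pairwise orthogonal (insert v B)" using B(2,4)
      by (auto simp: pairwise_insert W_def orthogonal_def inner_commute)
    ultimately show ?thesis using B(1-3) vV nv ev
      by (intro exI[of _ "insert v B"]) (auto simp: W_def)
  qed
qed

lemma sym_real_orthonormal_eigenbasis:
  fixes A :: "real^'n^'n"
  assumes "sym_real A"
  obtains B where "finite B" "\<forall>b\<in>B. norm b = 1 \<and> A *v b = (b \<bullet> (A *v b)) *\<^sub>R b"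
    "pairwise orthogonal B" "span B = UNIV"
  using sym_real_eigenbasis_of_invariant_subspace[OF assms, of UNIV] by auto

lemma matrix_eq_on_spanning_set:
  fixes A C :: "real^'n^'m"
  assumes "span B = UNIV" "\<And>b. b \<in> B \<Longrightarrow> A *v b = C *v b"
  shows "A = C"
proof -
  have "A *v x = C *v x" for x
    by (rule linear_eq_on_span[OF matrix_vector_mul_linear matrix_vector_mul_linear, where B=B])
      (use assms in auto)
  thus ?thesis by (simp add: matrix_eq)
qed

definition spectral_matrix :: "(real^'n \<Rightarrow> real) \<Rightarrow> (real^'n) set \<Rightarrow> real^'n^'n" where
  "spectral_matrix f B = (\<chi> i j. \<Sum>b\<in>B. f b * b$i * b$j)"

lemma spectral_matrix_mult: "spectral_matrix f B *v x = (\<Sum>b\<in>B. (f b * (b \<bullet> x)) *\<^sub>R b)"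
proof -
  have "(spectral_matrix f B *v x) $ i = (\<Sum>j\<in>UNIV. \<Sum>b\<in>B. f b * b$i * (b$j * x$j))" for i
    unfolding spectral_matrix_def matrix_vector_mult_def by (simp add: sum_distrib_right mult.assoc)
  also have "\<dots> i = (\<Sum>b\<in>B. \<Sum>j\<in>UNIV. f b * b$i * (b$j * x$j))" for i
    by (rule sum.swap)
  finally show ?thesis by (simp add: vec_eq_iff inner_vec_def sum_distrib_left mult_ac)
qed

lemma spectral_matrix_eigen:
  assumes "finite B" "\<forall>b\<in>B. norm b = 1" "pairwise orthogonal B" "b \<in> B"
  shows "spectral_matrix f B *v b = f b *\<^sub>R b"
proof -
  have "c \<bullet> b = (if c = b then 1 else 0)" if "c \<in> B" for c
    using assms that by (auto simp: pairwise_def orthogonal_def norm_eq_1)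
  hence "spectral_matrix f B *v b = (\<Sum>c\<in>B. if c = b then f b *\<^sub>R b else 0)"
    unfolding spectral_matrix_mult by (intro sum.cong) auto
  thus ?thesis using assms by simp
qed

lemma pos_def_spectral_matrix:
  fixes B :: "(real^'n) set"
  assumes "finite B" "span B = UNIV" "\<forall>b\<in>B. f b > 0"
  shows "pos_def_real (spectral_matrix f B)"
  unfolding pos_def_real_def sym_real_def
proof (intro conjI allI impI)
  show "transpose (spectral_matrix f B) = spectral_matrix f B"
    by (simp add: spectral_matrix_def transpose_def vec_eq_iff mult_ac)
  fix x :: "real^'n" assume "x \<noteq> 0"
  have "\<exists>b\<in>B. b \<bullet> x \<noteq> 0"
  proof (rule ccontr)
    assume "\<not> ?thesis"
    hence "orthogonal x x"
      using orthogonal_to_span[of x B x] assms(2) by (auto simp: orthogonal_def inner_commute)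
    thus False using \<open>x \<noteq> 0\<close> by (simp add: orthogonal_def)
  qed
  then obtain b where "b \<in> B" "b \<bullet> x \<noteq> 0" by blast
  have "0 < (\<Sum>c\<in>B. f c * (c \<bullet> x)\<^sup>2)"
    using assms \<open>b \<in> B\<close> \<open>b \<bullet> x \<noteq> 0\<close> by (intro sum_pos2[of B b]) auto
  also have "\<dots> = x \<bullet> (spectral_matrix f B *v x)"
    by (simp add: spectral_matrix_mult inner_sum_right power2_eq_square mult_ac inner_commute)
  finally show "x \<bullet> (spectral_matrix f B *v x) > 0" .
qed

lemma pd_sqrt_exists:
  fixes P :: "real^'n^'n"
  assumes pd: "pos_def_real P"
  shows "\<exists>S. pos_def_real S \<and> S ** S = P"
proof -
  obtain B where B: "finite B" "\<forall>b\<in>B. norm b = 1 \<and> P *v b = (b \<bullet> (P *v b)) *\<^sub>R b"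
    "pairwise orthogonal B" "span B = UNIV"
    using sym_real_orthonormal_eigenbasis pd unfolding pos_def_real_def by metis
  define l where "l b = b \<bullet> (P *v b)" for b
  have l: "l b > 0" if "b \<in> B" for b
  proof -
    have "b \<noteq> 0" using B(2) that by auto
    thus ?thesis using pd by (simp add: l_def pos_def_real_def)
  qed
  define S where "S = spectral_matrix (\<lambda>b. sqrt (l b)) B"
  have "S ** S = P"
  proof (rule matrix_eq_on_spanning_set[OF B(4)])
    fix b assume "b \<in> B"
    have "S *v b = sqrt (l b) *\<^sub>R b"
      unfolding S_def using B \<open>b \<in> B\<close> by (intro spectral_matrix_eigen) auto
    hence "(S ** S) *v b = (sqrt (l b) * sqrt (l b)) *\<^sub>R b"
      by (simp add: matrix_vector_mul_assoc[symmetric] matrix_vector_mult_scaleR)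
    also have "\<dots> = P *v b" using l[OF \<open>b \<in> B\<close>] B(2) \<open>b \<in> B\<close> by (simp add: l_def)
    finally show "(S ** S) *v b = P *v b" .
  qed
  moreover have "pos_def_real S"
    unfolding S_def using B l by (intro pos_def_spectral_matrix) auto
  ultimately show ?thesis by blast
qed

text \<open>With \<open>D = S - T\<close> one has \<open>S D + D T = S\<^sup>2 - T\<^sup>2 = 0\<close>; testing this against a unit
  eigenvector of \<open>D\<close> with eigenvalue \<open>d\<close> gives \<open>d (b \<bullet> S b + b \<bullet> T b) = 0\<close>, so \<open>d = 0\<close>.\<close>
lemma pd_sqrt_unique:
  fixes S T :: "real^'n^'n"
  assumes S: "pos_def_real S" and T: "pos_def_real T" and eq: "S ** S = T ** T"
  shows "S = T"
proof -
  define D where "D = S - T"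
  have "sym_real D" using S T by (simp add: pos_def_real_def sym_real_def D_def transpose_diff)
  then obtain B where B: "finite B" "\<forall>b\<in>B. norm b = 1 \<and> D *v b = (b \<bullet> (D *v b)) *\<^sub>R b"
    "pairwise orthogonal B" "span B = UNIV"
    by (rule sym_real_orthonormal_eigenbasis)
  have "D = 0"
  proof (rule matrix_eq_on_spanning_set[OF B(4)])
    fix b assume "b \<in> B"
    define d where "d = b \<bullet> (D *v b)"
    have Db: "D *v b = d *\<^sub>R b" and "b \<noteq> 0" using B(2) \<open>b \<in> B\<close> by (auto simp: d_def)
    have "S *v (D *v b) + D *v (T *v b) = S *v (S *v b) - T *v (T *v b)"
      by (simp add: D_def matrix_vector_mult_diff_rdistrib matrix_vector_mult_diff_distrib)
    also have "\<dots> = (S ** S) *v b - (T ** T) *v b" by (simp add: matrix_vector_mul_assoc)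
    finally have "S *v (D *v b) + D *v (T *v b) = (S ** S) *v b - (T ** T) *v b" .
    hence "b \<bullet> (S *v (D *v b) + D *v (T *v b)) = 0" using eq by simp
    moreover have "b \<bullet> (D *v (T *v b)) = d * (b \<bullet> (T *v b))"
      using sym_real_inner[OF \<open>sym_real D\<close>, of b "T *v b"] by (simp add: Db inner_commute)
    ultimately have "d * (b \<bullet> (S *v b) + b \<bullet> (T *v b)) = 0"
      by (simp add: Db matrix_vector_mult_scaleR inner_add_right algebra_simps)
    moreover have "b \<bullet> (S *v b) + b \<bullet> (T *v b) > 0"
      using S T \<open>b \<noteq> 0\<close> by (simp add: pos_def_real_def add_pos_pos)
    ultimately show "D *v b = 0 *v b" using Db by simp
  qed
  thus ?thesis by (simp add: D_def)
qed

lemma pd_sqrt: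
  assumes "pos_def_real P"
  shows "pos_def_real (pd_sqrt P)" "pd_sqrt P ** pd_sqrt P = P"
proof -
  have "\<exists>!S. pos_def_real S \<and> S ** S = P"
    using pd_sqrt_exists[OF assms] pd_sqrt_unique by metis
  hence "pos_def_real (pd_sqrt P) \<and> pd_sqrt P ** pd_sqrt P = P"
    unfolding pd_sqrt_def by (rule theI')
  thus "pos_def_real (pd_sqrt P)" "pd_sqrt P ** pd_sqrt P = P" by auto
qed

lemma matrix_inv_ker_zero:
  fixes A :: "'a::field^'n^'n"
  assumes "\<forall>x. A *v x = 0 \<longrightarrow> x = 0"
  shows "A ** matrix_inv A = mat 1" "matrix_inv A ** A = mat 1"
proof -
  have "\<exists>B. B ** A = mat 1" using matrix_left_invertible_ker assms by blast
  hence "invertible A" using invertible_left_inverse by blast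
  hence "\<exists>A'. A ** A' = mat 1 \<and> A' ** A = mat 1" by (simp add: invertible_def)
  hence "A ** matrix_inv A = mat 1 \<and> matrix_inv A ** A = mat 1"
    unfolding matrix_inv_def by (rule someI_ex)
  thus "A ** matrix_inv A = mat 1" "matrix_inv A ** A = mat 1" by auto
qed

lemma inv_sqrt:
  assumes "pos_def_real P"
  shows "pd_sqrt P ** inv_sqrt P = mat 1" "inv_sqrt P ** pd_sqrt P = mat 1"
    "transpose (pd_sqrt P) = pd_sqrt P" "transpose (inv_sqrt P) = inv_sqrt P"
proof -
  let ?R = "pd_sqrt P"
  have R: "pos_def_real ?R" using pd_sqrt[OF assms] by blast
  hence "\<forall>x. ?R *v x = 0 \<longrightarrow> x = 0"
    unfolding pos_def_real_def by (metis inner_zero_right less_irrefl)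
  from matrix_inv_ker_zero[OF this]
  show inv: "?R ** inv_sqrt P = mat 1" "inv_sqrt P ** ?R = mat 1"
    unfolding inv_sqrt_def .
  show tR: "transpose ?R = ?R" using R by (simp add: pos_def_real_def sym_real_def)
  have left_inv: "transpose (inv_sqrt P) ** ?R = mat 1"
    using arg_cong[OF inv(1), of transpose] tR by (simp add: matrix_transpose_mul)
  have "transpose (inv_sqrt P) = transpose (inv_sqrt P) ** (?R ** inv_sqrt P)"
    by (simp add: inv(1))
  also have "\<dots> = (transpose (inv_sqrt P) ** ?R) ** inv_sqrt P" by (rule matrix_mul_assoc)
  also have "\<dots> = inv_sqrt P" by (simp add: left_inv)
  finally show "transpose (inv_sqrt P) = inv_sqrt P" .
qed

lemma sym_real_Bbar:
  assumes "pos_def_real P" "sym_real Q" "sym_real B"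
  shows "sym_real (Bbar Y0 P Q B)"
proof -
  have "transpose (B + Q) = B + Q" using assms(2,3) by (simp add: sym_real_def transpose_add)
  thus ?thesis using inv_sqrt(4)[OF assms(1)]
    by (simp add: sym_real_def Bbar_def transpose_scalar matrix_transpose_mul matrix_mul_assoc)
qed

lemma Bbar_surj:
  assumes "pos_def_real P" "sym_real Q" "sym_real X" "Y0 \<noteq> 0"
  obtains B where "sym_real B" "Bbar Y0 P Q B = X"
proof
  let ?R = "pd_sqrt P" and ?S = "inv_sqrt P"
  note sqrt = inv_sqrt[OF assms(1)]
  define B where "B = (1 / Y0) *\<^sub>R (?R ** X ** ?R) - Q"
  have "transpose (?R ** X ** ?R) = ?R ** X ** ?R"
    using sqrt(3) assms(3) by (simp add: sym_real_def matrix_transpose_mul matrix_mul_assoc)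
  thus "sym_real B" using assms(2)
    by (simp add: B_def sym_real_def transpose_scalar transpose_diff)
  have "?S ** (B + Q) ** ?S = (1 / Y0) *\<^sub>R ((?S ** ?R) ** X ** (?R ** ?S))"
    by (simp add: B_def scalar_matrix_assoc matrix_scalar_ac matrix_mul_assoc)
  thus "Bbar Y0 P Q B = X" using sqrt(1,2) assms(4) by (simp add: Bbar_def)
qed

section \<open>The Cayley transform\<close>

definition of_real_matrix :: "real^'n^'m \<Rightarrow> complex^'n^'m" where
  "of_real_matrix X = (\<chi> i j. complex_of_real (X $ i $ j))"

definition Re_vec :: "complex^'n \<Rightarrow> real^'n" where
  "Re_vec z = (\<chi> i. Re (z $ i))"

definition Im_vec :: "complex^'n \<Rightarrow> real^'n" where
  "Im_vec z = (\<chi> i. Im (z $ i))"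

lemma Re_vec_simps [simp]:
  "Re_vec (z + w) = Re_vec z + Re_vec w" "Re_vec (z - w) = Re_vec z - Re_vec w"
  "Re_vec (- z) = - Re_vec z" "Re_vec 0 = 0"
  "Re_vec (r *\<^sub>R z) = r *\<^sub>R Re_vec z" "Re_vec (\<i> *s z) = - Im_vec z"
  by (simp_all add: Re_vec_def Im_vec_def vec_eq_iff)

lemma Im_vec_simps [simp]:
  "Im_vec (z + w) = Im_vec z + Im_vec w" "Im_vec (z - w) = Im_vec z - Im_vec w"
  "Im_vec (- z) = - Im_vec z" "Im_vec 0 = 0"
  "Im_vec (r *\<^sub>R z) = r *\<^sub>R Im_vec z" "Im_vec (\<i> *s z) = Re_vec z"
  by (simp_all add: Re_vec_def Im_vec_def vec_eq_iff)

lemma vec_complex_eqI: "Re_vec z = Re_vec w \<Longrightarrow> Im_vec z = Im_vec w \<Longrightarrow> z = w"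
  by (simp add: Re_vec_def Im_vec_def vec_eq_iff complex_eq_iff)

lemma inner_Re_Im_vec: "z \<bullet> w = Re_vec z \<bullet> Re_vec w + Im_vec z \<bullet> Im_vec w"
  by (simp add: inner_vec_def inner_complex_def Re_vec_def Im_vec_def sum.distrib)

lemma Re_vec_of_real_matrix [simp]: "Re_vec (of_real_matrix X *v z) = X *v Re_vec z"
  by (simp add: Re_vec_def of_real_matrix_def vec_eq_iff matrix_vector_mult_def Re_sum mult.commute)

lemma Im_vec_of_real_matrix [simp]: "Im_vec (of_real_matrix X *v z) = X *v Im_vec z"
  by (simp add: Im_vec_def of_real_matrix_def vec_eq_iff matrix_vector_mult_def Im_sum mult.commute)

lemma matrix_vector_mult_uminus_left: "(- A) *v x = - (A *v (x::'a::ring_1^'n))"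
  by (simp add: matrix_vector_mult_def vec_eq_iff sum_negf)

lemma of_real_matrix_uminus: "of_real_matrix (- X) = - of_real_matrix X"
  by (simp add: of_real_matrix_def vec_eq_iff)

lemma of_real_matrix_scaleR: "of_real_matrix (r *\<^sub>R X) *v z = r *\<^sub>R (of_real_matrix X *v z)"
  by (rule vec_complex_eqI) (simp_all add: scaleR_matrix_vector_assoc)

lemma norm_i_smult [simp]: "norm (\<i> *s z) = norm (z::complex^'n)"
  by (simp add: norm_eq_sqrt_inner inner_Re_Im_vec add.commute)

lemma inner_i_smult_i_smult [simp]: "(\<i> *s z) \<bullet> (\<i> *s w) = z \<bullet> (w::complex^'n)"
  by (simp add: inner_Re_Im_vec add.commute)

lemma inner_i_smult_self [simp]: "(\<i> *s z) \<bullet> (z::complex^'n) = 0"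
  by (simp add: inner_Re_Im_vec inner_commute)

text \<open>For the real inner product on \<open>\<complex>\<^sup>n\<close>, \<open>z \<mapsto> X z\<close> is self-adjoint, \<open>z \<mapsto> \<i> z\<close> is skew, and the
  two commute, so \<open>z \<mapsto> \<i> X z\<close> is skew.\<close>
lemma inner_i_of_real_matrix_self:
  assumes "sym_real X"
  shows "z \<bullet> (\<i> *s (of_real_matrix X *v z)) = 0"
  using sym_real_inner[OF assms, of "Re_vec z" "Im_vec z"]
  by (simp add: inner_Re_Im_vec inner_commute)

text \<open>\<open>cayley_plus Y0 X\<close> is the matrix \<open>Y0 I + \<i> X\<close>; the matrix \<open>Y0 I - \<i> X\<close> of the paper is
  \<open>cayley_plus Y0 (- X)\<close>.\<close>
definition cayley_plus :: "real \<Rightarrow> real^'n^'n \<Rightarrow> complex^'n^'n" where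
  "cayley_plus Y0 X = (\<chi> i j. (if i = j then complex_of_real Y0 else 0) + \<i> * complex_of_real (X $ i $ j))"

definition cayley :: "real \<Rightarrow> real^'n^'n \<Rightarrow> complex^'n^'n" where
  "cayley Y0 X = matrix_inv (cayley_plus Y0 X) ** cayley_plus Y0 (- X)"

lemma Theta_bar_eq_cayley: "Theta_bar Y0 P Q B = cayley Y0 (Bbar Y0 P Q B)"
  by (simp add: Theta_bar_def cayley_def cayley_plus_def)

lemma cayley_plus_mult:
  "cayley_plus Y0 X *v z = Y0 *\<^sub>R z + \<i> *s (of_real_matrix X *v z)"
proof -
  have "(cayley_plus Y0 X *v z) $ i = Y0 *\<^sub>R z $ i + \<i> * (of_real_matrix X *v z) $ i" for i
  proof -
    have "(\<Sum>j\<in>UNIV. (if i = j then complex_of_real Y0 else 0) * z $ j)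
        = (\<Sum>j\<in>UNIV. if i = j then complex_of_real Y0 * z $ j else 0)"
      by (rule sum.cong) auto
    hence "(\<Sum>j\<in>UNIV. (if i = j then complex_of_real Y0 else 0) * z $ j) = Y0 *\<^sub>R z $ i"
      by (simp add: scaleR_conv_of_real)
    thus ?thesis
      by (simp add: cayley_plus_def of_real_matrix_def matrix_vector_mult_def distrib_right
          sum.distrib sum_distrib_left mult.assoc)
  qed
  thus ?thesis by (simp add: vec_eq_iff)
qed

lemma norm_cayley_plus_mult:
  assumes "sym_real X"
  shows "(norm (cayley_plus Y0 X *v z))\<^sup>2 = Y0\<^sup>2 * (norm z)\<^sup>2 + (norm (of_real_matrix X *v z))\<^sup>2"
proof -
  define w where "w = \<i> *s (of_real_matrix X *v z)"
  have "(norm (cayley_plus Y0 X *v z))\<^sup>2 = (Y0 *\<^sub>R z + w) \<bullet> (Y0 *\<^sub>R z + w)"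
    by (simp add: cayley_plus_mult w_def power2_norm_eq_inner)
  also have "\<dots> = Y0\<^sup>2 * (z \<bullet> z) + 2 * Y0 * (z \<bullet> w) + w \<bullet> w"
    by (simp add: inner_add_left inner_add_right inner_commute power2_eq_square algebra_simps)
  also have "\<dots> = Y0\<^sup>2 * (norm z)\<^sup>2 + (norm (of_real_matrix X *v z))\<^sup>2"
    using inner_i_of_real_matrix_self[OF assms, of z]
    by (simp add: w_def flip: power2_norm_eq_inner)
  finally show ?thesis .
qed

lemma norm_cayley_plus_uminus_mult:
  assumes "sym_real X"
  shows "norm (cayley_plus Y0 (- X) *v z) = norm (cayley_plus Y0 X *v z)"
proof -
  have "(norm (cayley_plus Y0 (- X) *v z))\<^sup>2 = (norm (cayley_plus Y0 X *v z))\<^sup>2"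
    using assms sym_real_uminus[OF assms]
    by (simp add: norm_cayley_plus_mult of_real_matrix_uminus matrix_vector_mult_uminus_left)
  thus ?thesis by (simp add: power2_eq_iff_nonneg)
qed

lemma cayley_plus_inverse:
  assumes "sym_real X" "Y0 \<noteq> 0"
  shows "cayley_plus Y0 X ** matrix_inv (cayley_plus Y0 X) = mat 1"
    "matrix_inv (cayley_plus Y0 X) ** cayley_plus Y0 X = mat 1"
proof -
  have "\<forall>z. cayley_plus Y0 X *v z = 0 \<longrightarrow> z = 0"
  proof (intro allI impI)
    fix z assume "cayley_plus Y0 X *v z = 0"
    hence "Y0\<^sup>2 * (norm z)\<^sup>2 + (norm (of_real_matrix X *v z))\<^sup>2 = 0"
      using norm_cayley_plus_mult[OF assms(1), of Y0 z] by simp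
    thus "z = 0" using assms(2) by (simp add: add_nonneg_eq_0_iff)
  qed
  from matrix_inv_ker_zero[OF this]
  show "cayley_plus Y0 X ** matrix_inv (cayley_plus Y0 X) = mat 1"
    "matrix_inv (cayley_plus Y0 X) ** cayley_plus Y0 X = mat 1" .
qed

lemma Re_vec_cayley_plus_mult [simp]:
  "Re_vec (cayley_plus Y0 X *v z) = Y0 *\<^sub>R Re_vec z - X *v Im_vec z"
  by (simp add: cayley_plus_mult)

lemma Im_vec_cayley_plus_mult [simp]:
  "Im_vec (cayley_plus Y0 X *v z) = Y0 *\<^sub>R Im_vec z + X *v Re_vec z"
  by (simp add: cayley_plus_mult)

lemma cayley_plus_commute:
  "cayley_plus Y0 (- X) *v (cayley_plus Y0 X *v z) = cayley_plus Y0 X *v (cayley_plus Y0 (- X) *v z)"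
  by (rule vec_complex_eqI) (simp_all add: matrix_vector_mult_uminus_left matrix_vector_right_distrib
      matrix_vector_mult_diff_distrib matrix_vector_mult_scaleR algebra_simps)

text \<open>\<open>Y0 I + \<i> X\<close> and \<open>Y0 I - \<i> X\<close> commute and have the same norm on every vector.\<close>
lemma norm_cayley_mult:
  assumes "sym_real X" "Y0 \<noteq> 0"
  shows "norm (cayley Y0 X *v z) = norm z"
proof -
  let ?A = "cayley_plus Y0 X" and ?C = "cayley_plus Y0 (- X)"
  define y where "y = matrix_inv ?A *v z"
  have Ay: "?A *v y = z"
    using cayley_plus_inverse[OF assms] by (simp add: y_def matrix_vector_mul_assoc)
  have "cayley Y0 X *v z = matrix_inv ?A *v (?A *v (?C *v y))"
    by (simp add: cayley_def matrix_vector_mul_assoc[symmetric] cayley_plus_commute flip: Ay)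
  also have "\<dots> = ?C *v y"
    using cayley_plus_inverse[OF assms] by (simp add: matrix_vector_mul_assoc matrix_mul_assoc)
  finally show ?thesis
    using norm_cayley_plus_uminus_mult[OF assms(1)] Ay by simp
qed

lemma cayley_mult_eqI:
  assumes "sym_real X" "Y0 \<noteq> 0"
    and "of_real_matrix X *v (a + b) = - Y0 *\<^sub>R (\<i> *s (a - b))"
  shows "cayley Y0 X *v a = b"
proof -
  have "cayley_plus Y0 (- X) *v a = cayley_plus Y0 X *v b"
  proof (rule vec_complex_eqI)
    have "X *v Re_vec (a + b) = Y0 *\<^sub>R Im_vec (a - b)" "X *v Im_vec (a + b) = - Y0 *\<^sub>R Re_vec (a - b)"
      using arg_cong[OF assms(3), of Re_vec] arg_cong[OF assms(3), of Im_vec]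
      by (simp_all add: algebra_simps)
    thus "Re_vec (cayley_plus Y0 (- X) *v a) = Re_vec (cayley_plus Y0 X *v b)"
      "Im_vec (cayley_plus Y0 (- X) *v a) = Im_vec (cayley_plus Y0 X *v b)"
      by (simp_all add: matrix_vector_mult_uminus_left matrix_vector_right_distrib algebra_simps)
  qed
  hence "cayley Y0 X *v a = (matrix_inv (cayley_plus Y0 X) ** cayley_plus Y0 X) *v b"
    by (simp add: cayley_def matrix_vector_mul_assoc[symmetric])
  thus ?thesis using cayley_plus_inverse[OF assms(1,2)] by simp
qed

section \<open>Symmetric interpolation and density of the Cayley transform\<close>

definition outer_prod :: "real^'n \<Rightarrow> real^'n \<Rightarrow> real^'n^'n" where
  "outer_prod u v = (\<chi> i l. u $ i * v $ l)"

lemma outer_prod_mult: "outer_prod u v *v x = (v \<bullet> x) *\<^sub>R u"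
  by (simp add: outer_prod_def vec_eq_iff matrix_vector_mult_def inner_vec_def sum_distrib_left mult_ac)

text \<open>If \<open>f1, f2\<close> is dual to \<open>p1, p2\<close>, the matrix
  \<open>\<Sum>\<^sub>k (q\<^sub>k f\<^sub>k\<^sup>T + f\<^sub>k q\<^sub>k\<^sup>T) - \<Sum>\<^sub>k\<^sub>l (p\<^sub>k \<bullet> q\<^sub>l) f\<^sub>k f\<^sub>l\<^sup>T\<close> maps \<open>p\<^sub>k\<close> to \<open>q\<^sub>k\<close>; it is symmetric
  exactly when \<open>p1 \<bullet> q2 = p2 \<bullet> q1\<close>.\<close>
lemma sym_real_interpolation_dual:
  fixes p1 p2 q1 q2 f1 f2 :: "real^'n"
  assumes "f1 \<bullet> p1 = 1" "f1 \<bullet> p2 = 0" "f2 \<bullet> p1 = 0" "f2 \<bullet> p2 = 1" and c: "p1 \<bullet> q2 = p2 \<bullet> q1"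
  shows "\<exists>X. sym_real X \<and> X *v p1 = q1 \<and> X *v p2 = q2"
proof -
  define X where "X = outer_prod q1 f1 + outer_prod f1 q1 + outer_prod q2 f2 + outer_prod f2 q2
     - outer_prod ((p1 \<bullet> q1) *\<^sub>R f1) f1 - outer_prod ((p1 \<bullet> q2) *\<^sub>R f1) f2
     - outer_prod ((p2 \<bullet> q1) *\<^sub>R f2) f1 - outer_prod ((p2 \<bullet> q2) *\<^sub>R f2) f2"
  have c': "q2 \<bullet> p1 = q1 \<bullet> p2" using c by (simp add: inner_commute)
  have "sym_real X" unfolding sym_real_def X_def
    by (simp add: outer_prod_def transpose_def vec_eq_iff c algebra_simps)
  moreover have "X *v p1 = q1" "X *v p2 = q2"
    unfolding X_def using assms c'
    by (simp_all add: matrix_vector_mult_add_rdistrib matrix_vector_mult_diff_rdistrib outer_prod_mult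
        inner_commute)
  ultimately show ?thesis by blast
qed

lemma sym_real_interpolation:
  fixes p1 p2 q1 q2 :: "real^'n"
  assumes "j \<noteq> k" and minor: "p1$j * p2$k - p1$k * p2$j \<noteq> 0" and "p1 \<bullet> q2 = p2 \<bullet> q1"
  shows "\<exists>X. sym_real X \<and> X *v p1 = q1 \<and> X *v p2 = q2"
proof (rule sym_real_interpolation_dual)
  define d where "d = p1$j * p2$k - p1$k * p2$j"
  define f1 where "f1 = (1/d) *\<^sub>R (p2$k *\<^sub>R axis j 1 - p2$j *\<^sub>R axis k (1::real))"
  define f2 where "f2 = (1/d) *\<^sub>R (p1$j *\<^sub>R axis k 1 - p1$k *\<^sub>R axis j (1::real))"
  have f1: "f1 \<bullet> v = (p2$k * v$j - p2$j * v$k) / d" for v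
    by (simp add: f1_def inner_diff_left inner_axis')
  have f2: "f2 \<bullet> v = (p1$j * v$k - p1$k * v$j) / d" for v
    by (simp add: f2_def inner_diff_left inner_axis')
  show "f1 \<bullet> p1 = 1" "f1 \<bullet> p2 = 0" "f2 \<bullet> p1 = 0" "f2 \<bullet> p2 = 1"
    using minor by (simp_all add: f1 f2 d_def mult.commute)
qed (fact assms(3))

lemma sym_real_scaleR: "sym_real X \<Longrightarrow> sym_real (r *\<^sub>R X)"
  by (simp add: sym_real_def transpose_scalar)

text \<open>The real and imaginary parts of \<open>X z = -\<i> m\<close> are two real interpolation conditions, and their
  compatibility condition is \<open>z \<bullet> m = 0\<close>.\<close>
lemma sym_real_solution_of_minor:
  fixes z m :: "complex^'n"
  assumes "j \<noteq> k" "Im (cnj (z$j) * z$k) \<noteq> 0" "z \<bullet> m = 0"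
  shows "\<exists>X. sym_real X \<and> of_real_matrix X *v z = - (\<i> *s m)"
proof -
  have "(Re_vec z)$j * (Im_vec z)$k - (Re_vec z)$k * (Im_vec z)$j \<noteq> 0"
    using assms(2) by (simp add: Re_vec_def Im_vec_def algebra_simps)
  moreover have "Re_vec z \<bullet> (- Re_vec m) = Im_vec z \<bullet> Im_vec m"
    using assms(3) by (simp add: inner_Re_Im_vec)
  ultimately obtain X where "sym_real X" "X *v Re_vec z = Im_vec m" "X *v Im_vec z = - Re_vec m"
    using sym_real_interpolation[OF assms(1)] by blast
  moreover have "of_real_matrix X *v z = - (\<i> *s m)"
    by (rule vec_complex_eqI) (simp_all add: calculation)
  ultimately show ?thesis by blast
qed

lemma sym_real_solution_dim1:
  fixes z m :: "complex^'n" and j :: 'n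
  assumes one: "\<And>i. i = j" and "z \<noteq> 0" "z \<bullet> m = 0"
  shows "\<exists>X. sym_real X \<and> of_real_matrix X *v z = - (\<i> *s m)"
proof -
  have veq: "u = v" if "u$j = v$j" for u v :: "complex^'n"
    using that one by (metis vec_eq_iff)
  have zj: "z$j \<noteq> 0" using assms(2) veq[of z 0] by auto
  have U: "UNIV = {j}" using one by auto
  have "z \<bullet> m = z$j \<bullet> m$j" by (simp only: inner_vec_def U) simp
  hence orth: "Re (z$j) * Re (m$j) + Im (z$j) * Im (m$j) = 0"
    using assms(3) by (simp add: inner_complex_def)
  define r where "r = Re (z$j)"
  define i where "i = Im (z$j)"
  define a where "a = Re (m$j)"
  define b where "b = Im (m$j)"
  have den: "r\<^sup>2 + i\<^sup>2 \<noteq> 0" using zj by (simp add: r_def i_def complex_eq_iff)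
  define x where "x = (r * b - i * a) / (r\<^sup>2 + i\<^sup>2)"
  have orth': "a * r + b * i = 0" using orth by (simp add: r_def i_def a_def b_def algebra_simps)
  have "(r * b - i * a) * r - b * (r\<^sup>2 + i\<^sup>2) = - i * (a * r + b * i)"
    "(r * b - i * a) * i + a * (r\<^sup>2 + i\<^sup>2) = r * (a * r + b * i)"
    by (simp_all add: algebra_simps power2_eq_square)
  hence "(r * b - i * a) * r = b * (r\<^sup>2 + i\<^sup>2)" "(r * b - i * a) * i = - a * (r\<^sup>2 + i\<^sup>2)"
    using orth' by simp_all
  hence "x * r = b" "x * i = - a"
    using den by (simp_all add: x_def)
  hence "x *\<^sub>R z$j = - (\<i> * m$j)"
    by (simp add: complex_eq_iff r_def i_def a_def b_def)
  moreover have "of_real_matrix (mat 1) *v z = z" by (rule vec_complex_eqI) simp_all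
  ultimately have "of_real_matrix (x *\<^sub>R mat 1) *v z = - (\<i> *s m)"
    by (intro veq) (simp add: of_real_matrix_scaleR)
  moreover have "sym_real (x *\<^sub>R mat 1)"
    by (simp add: sym_real_def transpose_scalar transpose_mat)
  ultimately show ?thesis by blast
qed

lemma quadratic_small_nonroot:
  fixes c2 c1 c0 K \<epsilon> :: real
  assumes "c2 \<noteq> 0" "\<epsilon> > 0"
  obtains s where "0 < s" "s * K < \<epsilon>" "c2 * s\<^sup>2 + c1 * s + c0 \<noteq> 0"
proof -
  define d where "d = \<epsilon> / (\<bar>K\<bar> + 1)"
  have d: "d > 0" "d * \<bar>K\<bar> < \<epsilon>"
    using assms(2) by (auto simp: d_def field_simps)
  define q where "q s = c2 * s\<^sup>2 + c1 * s + c0" for s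
  have "c2 * d\<^sup>2 / 3 = q d - 4 * q (d / 2) + 3 * q (d / 3)"
    by (simp add: q_def field_simps power2_eq_square)
  hence "\<exists>s\<in>{d, d / 2, d / 3}. q s \<noteq> 0"
    using assms(1) d(1) by auto
  then obtain s where "s \<in> {d, d / 2, d / 3}" "q s \<noteq> 0" by blast
  moreover from this have "0 < s" "s \<le> d" using d(1) by auto
  moreover from this have "s * K < \<epsilon>"
    using d(2) by (smt (verit) abs_ge_self mult_left_mono mult_right_mono abs_ge_zero)
  ultimately show ?thesis using that by (simp add: q_def)
qed

text \<open>The perturbation direction \<open>c (e\<^sub>j + \<i> e\<^sub>k)\<close> is isotropic, which makes the \<open>(j, k)\<close>-minor of
  the real and imaginary parts a quadratic in the step size with leading coefficient
  \<open>4 \<bar>c\<bar>\<^sup>2\<close>; the factor \<open>c \<noteq> 0\<close> is chosen to keep the perturbation orthogonal to \<open>m\<close>.\<close>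
lemma perturbation_with_nonzero_minor:
  fixes p m :: "complex^'n"
  assumes "j \<noteq> k" "\<epsilon> > 0"
  obtains t where "norm t < \<epsilon>" "t \<bullet> m = 0" "Im (cnj ((p + 2 *\<^sub>R t)$j) * (p + 2 *\<^sub>R t)$k) \<noteq> 0"
proof -
  define w where "w = cnj (m$j) + \<i> * cnj (m$k)"
  define c where "c = (if w = 0 then 1 else \<i> * cnj w)"
  have "c \<noteq> 0" by (simp add: c_def)
  have "Re (c * w) = 0"
    by (simp add: c_def)
  define v where "v = axis j c + axis k (\<i> * c)"
  have vj: "v$j = c" and vk: "v$k = \<i> * c" using assms(1) by (simp_all add: v_def axis_def)
  have "v \<bullet> m = Re (c * w)"
    by (simp add: v_def inner_add_left inner_axis' inner_complex_def w_def algebra_simps)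
  hence vm: "v \<bullet> m = 0" using \<open>Re (c * w) = 0\<close> by simp
  define c1 where "c1 = 2 * Im (cnj (p$j) * (\<i> * c) + cnj c * p$k)"
  define c0 where "c0 = Im (cnj (p$j) * p$k)"
  have expand: "Im (cnj (p$j + (2 * s) *\<^sub>R c) * (p$k + (2 * s) *\<^sub>R (\<i> * c)))
      = (4 * ((Re c)\<^sup>2 + (Im c)\<^sup>2)) * s\<^sup>2 + c1 * s + c0" for s
    by (simp add: c1_def c0_def power2_eq_square algebra_simps)
  have "(Re c)\<^sup>2 + (Im c)\<^sup>2 = (cmod c)\<^sup>2" by (simp add: cmod_power2)
  hence "4 * ((Re c)\<^sup>2 + (Im c)\<^sup>2) \<noteq> 0" using \<open>c \<noteq> 0\<close> by simp
  then obtain s where s: "0 < s" "s * norm v < \<epsilon>"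
    "(4 * ((Re c)\<^sup>2 + (Im c)\<^sup>2)) * s\<^sup>2 + c1 * s + c0 \<noteq> 0"
    using assms(2) by (rule quadratic_small_nonroot)
  show ?thesis
  proof
    show "norm (s *\<^sub>R v) < \<epsilon>" using s by simp
    show "(s *\<^sub>R v) \<bullet> m = 0" using vm by simp
    show "Im (cnj ((p + 2 *\<^sub>R (s *\<^sub>R v))$j) * (p + 2 *\<^sub>R (s *\<^sub>R v))$k) \<noteq> 0"
      using s(3) expand[of s] by (simp add: vj vk)
  qed
qed

lemma perturbation_nonzero:
  fixes p m :: "complex^'n"
  assumes "m \<noteq> 0" "\<epsilon> > 0"
  obtains t where "norm t < \<epsilon>" "t \<bullet> m = 0" "p + 2 *\<^sub>R t \<noteq> 0"
proof -
  define v where "v = \<i> *s m"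
  have expand: "(p + 2 *\<^sub>R (s *\<^sub>R v)) \<bullet> (p + 2 *\<^sub>R (s *\<^sub>R v))
      = (4 * (m \<bullet> m)) * s\<^sup>2 + (4 * (p \<bullet> v)) * s + p \<bullet> p" for s
    by (simp add: v_def inner_add_left inner_add_right inner_commute power2_eq_square algebra_simps)
  have "4 * (m \<bullet> m) \<noteq> 0" using assms(1) by simp
  then obtain s where s: "0 < s" "s * norm v < \<epsilon>"
    "(4 * (m \<bullet> m)) * s\<^sup>2 + (4 * (p \<bullet> v)) * s + p \<bullet> p \<noteq> 0"
    using assms(2) by (rule quadratic_small_nonroot)
  show ?thesis
  proof
    show "norm (s *\<^sub>R v) < \<epsilon>" using s by simp
    show "(s *\<^sub>R v) \<bullet> m = 0" by (simp add: v_def)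
    show "p + 2 *\<^sub>R (s *\<^sub>R v) \<noteq> 0" using s(3) expand[of s] by auto
  qed
qed

text \<open>In dimension one there is no \<open>(j, k)\<close>-minor; there \<open>X\<close> is a scalar and \<open>z \<noteq> 0\<close> suffices.\<close>
lemma perturbed_sym_solution:
  fixes p m :: "complex^'n"
  assumes "p \<bullet> m = 0" "m \<noteq> 0" "\<epsilon> > 0"
  obtains t X where "norm t < \<epsilon>" "sym_real X" "of_real_matrix X *v (p + 2 *\<^sub>R t) = - (\<i> *s m)"
proof (cases "\<exists>j k::'n. j \<noteq> k")
  case True
  then obtain j k :: 'n where "j \<noteq> k" by blast
  then obtain t where t: "norm t < \<epsilon>" "t \<bullet> m = 0" "Im (cnj ((p + 2 *\<^sub>R t)$j) * (p + 2 *\<^sub>R t)$k) \<noteq> 0"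
    using perturbation_with_nonzero_minor assms(3) by blast
  moreover have "(p + 2 *\<^sub>R t) \<bullet> m = 0" using assms(1) t(2) by (simp add: inner_add_left)
  ultimately show ?thesis
    using sym_real_solution_of_minor[OF \<open>j \<noteq> k\<close>] that by blast
next
  case False
  obtain j :: 'n where True by blast
  from False have "\<And>i. i = j" by blast
  obtain t where t: "norm t < \<epsilon>" "t \<bullet> m = 0" "p + 2 *\<^sub>R t \<noteq> 0"
    using perturbation_nonzero assms(2,3) by blast
  moreover have "(p + 2 *\<^sub>R t) \<bullet> m = 0" using assms(1) t(2) by (simp add: inner_add_left)
  ultimately show ?thesis
    using sym_real_solution_dim1[OF \<open>\<And>i. i = j\<close>] that by blast
qed

text \<open>Rather than \<open>\<Theta> a = b\<close>, which need not be solvable, one solves \<open>\<Theta> (a + t) = b + t\<close> for a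
  small \<open>t\<close>; since \<open>\<Theta>\<close> is unitary this gives \<open>\<parallel>\<Theta> a - b\<parallel> \<le> 2 \<parallel>t\<parallel>\<close>.\<close>
lemma cayley_approx:
  fixes a b :: "complex^'n"
  assumes "Y0 \<noteq> 0" "norm a = norm b" "\<epsilon> > 0"
  obtains X where "sym_real X" "norm (cayley Y0 X *v a - b) < \<epsilon>"
proof (cases "a = b")
  case True
  have "cayley Y0 0 *v a = a"
    using assms(1) by (intro cayley_mult_eqI sym_real_0) (simp_all add: of_real_matrix_def vec_eq_iff
        matrix_vector_mult_def)
  thus ?thesis using that[OF sym_real_0] True assms(3) by simp
next
  case False
  have "(a + b) \<bullet> (a - b) = (norm a)\<^sup>2 - (norm b)\<^sup>2"
    by (simp add: power2_norm_eq_inner inner_add_left inner_diff_left inner_add_right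
        inner_diff_right inner_commute)
  hence "(a + b) \<bullet> (a - b) = 0" using assms(2) by simp
  then obtain t X where t: "norm t < \<epsilon> / 2" and X: "sym_real X"
    and eq: "of_real_matrix X *v (a + b + 2 *\<^sub>R t) = - (\<i> *s (a - b))"
    using perturbed_sym_solution[of "a + b" "a - b" "\<epsilon> / 2"] False assms(3) by auto
  have "cayley Y0 (Y0 *\<^sub>R X) *v (a + t) = b + t"
  proof (rule cayley_mult_eqI)
    show "sym_real (Y0 *\<^sub>R X)" using X by (rule sym_real_scaleR)
    have "of_real_matrix (Y0 *\<^sub>R X) *v (a + t + (b + t))
        = Y0 *\<^sub>R (of_real_matrix X *v (a + b + 2 *\<^sub>R t))"
      by (simp add: of_real_matrix_scaleR scaleR_2 add_ac)
    also have "\<dots> = Y0 *\<^sub>R (- (\<i> *s (a - b)))" by (simp only: eq)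
    also have "\<dots> = - Y0 *\<^sub>R (\<i> *s (a + t - (b + t)))" by (simp add: algebra_simps)
    finally show "of_real_matrix (Y0 *\<^sub>R X) *v (a + t + (b + t)) = - Y0 *\<^sub>R (\<i> *s (a + t - (b + t)))" .
  qed (fact assms(1))
  hence "cayley Y0 (Y0 *\<^sub>R X) *v a - b = t - cayley Y0 (Y0 *\<^sub>R X) *v t"
    by (simp add: matrix_vector_right_distrib algebra_simps)
  also have "norm \<dots> \<le> norm t + norm t"
    using norm_triangle_ineq4 norm_cayley_mult[OF sym_real_scaleR[OF X] assms(1)] by metis
  finally have "norm (cayley Y0 (Y0 *\<^sub>R X) *v a - b) < \<epsilon>" using t by linarith
  thus ?thesis by (rule that[OF sym_real_scaleR[OF X]])
qed

section \<open>Receive power\<close>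

lemma herm_form_le: "cmod (herm_form g M w) \<le> norm g * norm (M *v w)"
proof -
  have "cmod (herm_form g M w) \<le> (\<Sum>i\<in>UNIV. cmod (cnj (g $ i) * (M *v w) $ i))"
    unfolding herm_form_def by (rule norm_sum)
  also have "\<dots> = (\<Sum>i\<in>UNIV. cmod (g $ i) * cmod ((M *v w) $ i))" by (simp add: norm_mult)
  also have "\<dots> \<le> L2_set (\<lambda>i. cmod (g $ i)) UNIV * L2_set (\<lambda>i. cmod ((M *v w) $ i)) UNIV"
    using L2_set_mult_ineq[of "\<lambda>i. cmod (g $ i)" "\<lambda>i. cmod ((M *v w) $ i)" UNIV] by simp
  also have "\<dots> = norm g * norm (M *v w)" by (simp add: norm_vec_def)
  finally show ?thesis .
qed

lemma norm_axis_complex [simp]: "norm (axis j (1::complex)) = 1"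
  by (simp add: norm_eq_sqrt_inner inner_axis_axis)

lemma herm_form_attains:
  fixes M :: "complex^'n^'m"
  obtains g where "norm g = 1" "cmod (herm_form g M w) = norm (M *v w)"
proof (cases "M *v w = 0")
  case True
  obtain j :: 'm where True by blast
  show ?thesis using True by (intro that[of "axis j 1"]) (simp_all add: herm_form_def)
next
  case False
  define v where "v = M *v w"
  have "herm_form ((1 / norm v) *\<^sub>R v) M w = (1 / norm v) *\<^sub>R (\<Sum>i\<in>UNIV. cnj (v $ i) * v $ i)"
    by (simp add: herm_form_def v_def scaleR_sum_right)
  also have "(\<Sum>i\<in>UNIV. cnj (v $ i) * v $ i) = (\<Sum>i\<in>UNIV. complex_of_real ((cmod (v $ i))\<^sup>2))"
    by (rule sum.cong) (simp_all, metis complex_norm_square mult.commute of_real_power)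
  also have "\<dots> = complex_of_real ((norm v)\<^sup>2)"
    by (simp add: norm_vec_def L2_set_def sum_nonneg)
  also have "(1 / norm v) *\<^sub>R complex_of_real ((norm v)\<^sup>2) = complex_of_real (norm v)"
    using False by (simp add: v_def power2_eq_square scaleR_conv_of_real)
  finally have "cmod (herm_form ((1 / norm v) *\<^sub>R v) M w) = norm v" by simp
  thus ?thesis using False by (intro that[of "(1 / norm v) *\<^sub>R v"]) (simp_all add: v_def)
qed

lemma cascade_mult: "(C + D ** T ** A) *v w = C *v w + D *v (T *v (A *v w))"
  by (simp add: matrix_vector_mult_add_rdistrib matrix_vector_mul_assoc matrix_mul_assoc)

lemma compact_norm_eq_sphere_pairs:
  fixes f :: "'a::euclidean_space \<Rightarrow> 'b::euclidean_space"
  assumes "bounded_linear f"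
  shows "compact {(u :: 'b, w). norm u = norm (f w) \<and> norm w = 1}"
proof -
  let ?K = "{p :: 'b \<times> 'a. norm (fst p) = norm (f (snd p)) \<and> norm (snd p) = 1}"
  obtain C where "\<And>w. norm (f w) \<le> norm w * C"
    using bounded_linear.bounded[OF assms] by blast
  hence "?K \<subseteq> cball 0 C \<times> cball 0 1" by (auto simp: mem_Times_iff) (metis mult_1)
  hence "bounded ?K" by (rule bounded_subset[OF bounded_Times[OF bounded_cball bounded_cball]])
  moreover have "closed ?K"
    by (intro closed_Collect_conj closed_Collect_eq continuous_intros
        linear_continuous_on[OF bounded_linear_compose[OF assms bounded_linear_snd]])
  ultimately have "compact ?K" by (simp add: compact_eq_bounded_closed)
  moreover have "{(u :: 'b, w). norm u = norm (f w) \<and> norm w = 1} = ?K" by auto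
  ultimately show ?thesis by simp
qed

lemma ex_max_norm_on_norm_eq_pairs:
  fixes A :: "complex^'t^'i" and C :: "complex^'t^'r" and D :: "complex^'i^'r"
  obtains u0 w0 where "norm u0 = norm (A *v w0)" "norm w0 = 1"
    "\<And>u w. norm u = norm (A *v w) \<Longrightarrow> norm w = 1 \<Longrightarrow> norm (C *v w + D *v u) \<le> norm (C *v w0 + D *v u0)"
proof -
  let ?K = "{(u :: complex^'i, w). norm u = norm (A *v w) \<and> norm w = 1}"
  define F where "F p = norm (C *v snd p + D *v fst p)" for p :: "(complex^'i) \<times> (complex^'t)"
  obtain j :: 't where True by blast
  have "(A *v axis j 1, axis j 1) \<in> ?K" by simp
  hence "?K \<noteq> {}" by blast
  moreover have "continuous_on ?K F" unfolding F_def
    by (intro continuous_on_norm continuous_on_add linear_continuous_on bounded_linear_fst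
        bounded_linear_snd bounded_linear_compose[OF matrix_vector_mul_bounded_linear])
  ultimately obtain p where p: "p \<in> ?K" and pmax: "\<And>q. q \<in> ?K \<Longrightarrow> F q \<le> F p"
    using continuous_attains_sup[OF compact_norm_eq_sphere_pairs[OF matrix_vector_mul_bounded_linear]]
    by blast
  obtain u0 w0 where p_eq: "p = (u0, w0)" by (cases p)
  show ?thesis
  proof (rule that)
    show "norm u0 = norm (A *v w0)" "norm w0 = 1" using p p_eq by auto
    fix u :: "complex^'i" and w assume "norm u = norm (A *v w)" "norm w = 1"
    thus "norm (C *v w + D *v u) \<le> norm (C *v w0 + D *v u0)"
      using pmax[of "(u, w)"] p_eq by (simp add: F_def)
  qed
qed

lemma received_power_le:
  assumes "Y0 \<noteq> 0" "pos_def_real P" "sym_real Q" "sym_real B" "norm g = 1"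
    and max: "\<And>u w. norm u = norm (HIT *v w) \<Longrightarrow> norm w = 1 \<Longrightarrow> norm (HRT *v w + HRI *v u) \<le> c"
    and "norm w = 1"
  shows "cmod (herm_form g (HRT + HRI ** Theta_bar Y0 P Q B ** HIT) w) \<le> c"
proof -
  let ?\<Theta> = "cayley Y0 (Bbar Y0 P Q B)"
  have "cmod (herm_form g (HRT + HRI ** Theta_bar Y0 P Q B ** HIT) w)
      \<le> norm (HRT *v w + HRI *v (?\<Theta> *v (HIT *v w)))"
    using herm_form_le[of g "HRT + HRI ** Theta_bar Y0 P Q B ** HIT" w] assms(5)
    by (simp add: Theta_bar_eq_cayley cascade_mult)
  also have "\<dots> \<le> c"
    using norm_cayley_mult[OF sym_real_Bbar[OF assms(2-4), of Y0] assms(1)] assms(7) by (rule max)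
  finally show ?thesis .
qed

lemma received_power_approx:
  assumes "Y0 \<noteq> 0" "pos_def_real P" "sym_real Q" "norm u = norm (HIT *v w)" "e > 0"
  obtains B g where "sym_real B" "norm g = 1"
    "(norm (HRT *v w + HRI *v u))\<^sup>2 - e < (cmod (herm_form g (HRT + HRI ** Theta_bar Y0 P Q B ** HIT) w))\<^sup>2"
proof -
  define F where "F x = (norm (HRT *v w + HRI *v x))\<^sup>2" for x
  have "continuous (at u) F" unfolding F_def
    by (intro continuous_intros linear_continuous_at matrix_vector_mul_bounded_linear)
  then obtain d where "d > 0" and d: "\<And>x. dist x u < d \<Longrightarrow> dist (F x) (F u) < e"
    unfolding continuous_at_eps_delta using assms(5) by blast
  obtain X where X: "sym_real X" "norm (cayley Y0 X *v (HIT *v w) - u) < d"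
    using cayley_approx[OF assms(1) assms(4)[symmetric] \<open>d > 0\<close>] by blast
  obtain B where B: "sym_real B" "Bbar Y0 P Q B = X"
    using Bbar_surj[OF assms(2,3) X(1) assms(1)] by blast
  obtain g where g: "norm g = 1"
    "cmod (herm_form g (HRT + HRI ** Theta_bar Y0 P Q B ** HIT) w)
      = norm ((HRT + HRI ** Theta_bar Y0 P Q B ** HIT) *v w)"
    by (rule herm_form_attains)
  have "F u - e < F (cayley Y0 X *v (HIT *v w))"
    using d[of "cayley Y0 X *v (HIT *v w)"] X(2) by (simp add: dist_norm dist_real_def abs_less_iff)
  also have "\<dots> = (cmod (herm_form g (HRT + HRI ** Theta_bar Y0 P Q B ** HIT) w))\<^sup>2"
    using g(2) B(2) by (simp add: F_def Theta_bar_eq_cayley cascade_mult)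
  finally show ?thesis unfolding F_def by (rule that[OF B(1) g(1)])
qed

lemma received_power_Sup:
  fixes HRT :: "complex^'t^'r" and HRI :: "complex^'i^'r" and HIT :: "complex^'t^'i"
  assumes "Y0 \<noteq> 0" "PT > 0" "pos_def_real P" "sym_real Q"
    and u0w0: "norm u0 = norm (HIT *v w0)" "norm w0 = 1"
    and max: "\<And>u w. norm u = norm (HIT *v w) \<Longrightarrow> norm w = 1
      \<Longrightarrow> norm (HRT *v w + HRI *v u) \<le> norm (HRT *v w0 + HRI *v u0)"
  defines "L \<equiv> {PT * (cmod (herm_form g (HRT + HRI ** Theta_bar Y0 P Q B ** HIT) w))\<^sup>2
                  | B w g. sym_real B \<and> norm w = 1 \<and> norm g = 1}"
  shows "bdd_above L \<and> Sup L = PT * (norm (HRT *v w0 + HRI *v u0))\<^sup>2"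
proof -
  define m where "m = (norm (HRT *v w0 + HRI *v u0))\<^sup>2"
  have ub: "x \<le> PT * m" if x_in: "x \<in> L" for x
  proof -
    obtain B w g where x: "x = PT * (cmod (herm_form g (HRT + HRI ** Theta_bar Y0 P Q B ** HIT) w))\<^sup>2"
      and "sym_real B" "norm w = 1" "norm g = 1" using x_in unfolding L_def by blast
    have "cmod (herm_form g (HRT + HRI ** Theta_bar Y0 P Q B ** HIT) w) \<le> norm (HRT *v w0 + HRI *v u0)"
      by (rule received_power_le[OF assms(1,3,4) \<open>sym_real B\<close> \<open>norm g = 1\<close> max \<open>norm w = 1\<close>])
    thus ?thesis using assms(2) by (simp add: x m_def power_mono)
  qed
  have least: "PT * m \<le> y" if y: "\<And>x. x \<in> L \<Longrightarrow> x \<le> y" for y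
  proof (rule field_le_epsilon)
    fix e :: real assume "e > 0"
    hence "e / PT > 0" using assms(2) by simp
    then obtain B g where "sym_real B" "norm g = 1"
      "m - e / PT < (cmod (herm_form g (HRT + HRI ** Theta_bar Y0 P Q B ** HIT) w0))\<^sup>2"
      unfolding m_def by (rule received_power_approx[OF assms(1,3,4) u0w0(1)])
    hence "PT * m - e < PT * (cmod (herm_form g (HRT + HRI ** Theta_bar Y0 P Q B ** HIT) w0))\<^sup>2"
      using assms(2) by (simp add: field_simps)
    also have "\<dots> \<le> y"
      using \<open>sym_real B\<close> \<open>norm g = 1\<close> u0w0(2) by (intro y) (auto simp: L_def)
    finally show "PT * m \<le> y + e" by simp
  qed
  obtain j :: 'r where True by blast
  have "L \<noteq> {}" unfolding L_def using sym_real_0 u0w0(2) norm_axis_complex[of j] by blast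
  hence "Sup L = PT * m" using ub least by (rule cSup_eq_non_empty)
  moreover have "bdd_above L" using ub by (auto simp: bdd_above_def)
  ultimately show ?thesis by (simp add: m_def)
qed

theorem mainTheorem5:
  fixes HRT :: "complex^'t^'r" and HRI :: "complex^'i^'r" and HIT :: "complex^'t^'i"
    and Y0 PT :: real and P Q :: "real^'i^'i"
  assumes "Y0 > 0" and "PT > 0" and "pos_def_real P" and "sym_real Q"
  shows "\<exists>m. m \<in> {(norm (HRT *v w + HRI *v u))\<^sup>2 | u w.
                     norm u = norm (HIT *v w) \<and> norm w = 1}
           \<and> (\<forall>x \<in> {(norm (HRT *v w + HRI *v u))\<^sup>2 | u w.
                     norm u = norm (HIT *v w) \<and> norm w = 1}. x \<le> m)
           \<and> bdd_above {PT * (cmod (herm_form g (HRT + HRI ** Theta_bar Y0 P Q B ** HIT) w))\<^sup>2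
                        | B w g. sym_real B \<and> norm w = 1 \<and> norm g = 1}
           \<and> Sup {PT * (cmod (herm_form g (HRT + HRI ** Theta_bar Y0 P Q B ** HIT) w))\<^sup>2
                  | B w g. sym_real B \<and> norm w = 1 \<and> norm g = 1} = PT * m"
proof -
  obtain u0 w0 where u0w0: "norm u0 = norm (HIT *v w0)" "norm w0 = 1"
    and max: "\<And>u w. norm u = norm (HIT *v w) \<Longrightarrow> norm w = 1
      \<Longrightarrow> norm (HRT *v w + HRI *v u) \<le> norm (HRT *v w0 + HRI *v u0)"
    using ex_max_norm_on_norm_eq_pairs[of HIT HRT HRI] by blast
  define m where "m = (norm (HRT *v w0 + HRI *v u0))\<^sup>2"
  define U where "U = {(norm (HRT *v w + HRI *v u))\<^sup>2 | u w. norm u = norm (HIT *v w) \<and> norm w = 1}"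
  define L where "L = {PT * (cmod (herm_form g (HRT + HRI ** Theta_bar Y0 P Q B ** HIT) w))\<^sup>2
                  | B w g. sym_real B \<and> norm w = 1 \<and> norm g = 1}"
  have "m \<in> U" using u0w0 unfolding U_def m_def by blast
  moreover have "\<forall>x\<in>U. x \<le> m" using max unfolding U_def m_def by (fastforce intro!: power_mono)
  moreover have "bdd_above L \<and> Sup L = PT * m"
    using assms(1) unfolding L_def m_def by (intro received_power_Sup assms(2-4) u0w0 max) simp
  ultimately show ?thesis unfolding U_def[symmetric] L_def[symmetric] by blast
qed

end
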